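(* Fix $\varepsilon\in(0,1/2]$. Let $\mathcal C$ be a linear $[n,k]$ code over $F$ with $k/n\in[\varepsilon,1-\varepsilon]$, let $L\in\mathbb Z^+$ satisfy $L<\frac{1}{\sqrt{2n}}\,2^{\eta_q(\varepsilon)n}$, and let $\tau\in\mathbb Z_{\ge0}$ satisfy $\tau\ge\frac{L(n-k)}{L+1}$. If $\mathcal C$ is $(\tau,L)$-list decodable, then $\mathcal C$ is MDS.
   Context: $F=\mathrm{GF}(q)$. For $L\in\mathbb Z^+$ and $\tau\in\mathbb Z_{\ge0}$, a code $\mathcal C\subseteq F^n$ is $(\tau,L)$-list decodable if for every $y\in F^n$ at most $L$ codewords of $\mathcal C$ lie at Hamming distance at most $\tau$ from $y$. With $\mathsf h(x)=-x\log_2x-(1-x)\log_2(1-x)$, define $\eta_q(\varepsilon)=\mathsf h\!\left(\frac{q-1}{q}(1-\varepsilon)\right)-(1-\varepsilon)\,\mathsf h(1/q)$. *)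

theory Defs
  imports "HOL-Analysis.Analysis"
begin

text \<open>Words of length n are vectors in 'a^'n, n = CARD('n); F = 'a a finite field, q = CARD('a).\<close>

definition hamming_dist :: "'a ^ 'n \<Rightarrow> 'a ^ 'n \<Rightarrow> nat" where
  "hamming_dist x y = card {i. x $ i \<noteq> y $ i}"

definition list_decodable :: "('a ^ 'n) set \<Rightarrow> nat \<Rightarrow> nat \<Rightarrow> bool" where
  "list_decodable C \<tau> L \<longleftrightarrow> (\<forall>y. card {c \<in> C. hamming_dist c y \<le> \<tau>} \<le> L)"

definition min_dist :: "('a ^ 'n) set \<Rightarrow> nat" where
  "min_dist C = Inf {hamming_dist x y | x y. x \<in> C \<and> y \<in> C \<and> x \<noteq> y}"

definition is_MDS :: "('a::field ^ 'n) set \<Rightarrow> bool" where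
  "is_MDS C \<longleftrightarrow> min_dist C = CARD('n) - vec.dim C + 1"

definition bin_entropy :: "real \<Rightarrow> real" where
  "bin_entropy x = - x * log 2 x - (1 - x) * log 2 (1 - x)"

definition eta :: "nat \<Rightarrow> real \<Rightarrow> real" where
  "eta q \<epsilon> = bin_entropy ((real q - 1) / real q * (1 - \<epsilon>)) - (1 - \<epsilon>) * bin_entropy (1 / real q)"

end

(* If C is not MDS, the pigeonhole argument behind the Singleton bound yields a nonzero codeword c
   of weight at most n - k.  If q > L, split the support of c into L + 1 blocks of size about
   (n - k)/(L + 1) and let y agree with a_i c on the i-th block, for L + 1 distinct scalars a_i:
   all L + 1 codewords a_i c then lie within L (n - k)/(L + 1) <= tau of y.
   If q <= L, list decodability alone is impossible: double counting gives q^k |S(w)| <= L q^n for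
   a Hamming sphere S(w) of radius w = ceil((q - 1)(n - k)/q) <= tau, while the estimate
   binom(n, w) >= 2^(n h(w/n)) / sqrt(2n), together with the fact that the resulting exponent is
   smallest when the rate k/n equals eps, gives |S(w)| / q^(n-k) >= 2^(eta_q(eps) n) / sqrt(2n) > L. *)

theory Submission
  imports Defs "HOL-Real_Asymp.Real_Asymp"
begin

section \<open>Binomial coefficients\<close>

\<comment> \<open>Otherwise simp unfolds central binomial coefficients such as \<open>2 * Suc k choose Suc k\<close>.\<close>
declare binomial_Suc_Suc [simp del]

lemma binomial_Suc_times: "(n choose Suc m) * Suc m = (n choose m) * (n - m)"
  using binomial_absorption[of m n] binomial_absorb_comp[of n m] by (simp add: mult.commute)

lemma central_binomial_Suc: "((2 * Suc k) choose Suc k) * Suc k = 2 * (2*k+1) * ((2*k) choose k)"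
proof -
  have "Suc (2*k+1) = 2 * Suc k" by simp
  then have "((2 * Suc k) choose Suc k) * Suc k = 2 * (((2*k+1) choose k) * Suc k)"
    using Suc_times_binomial_eq[of "2*k+1" k] by (metis mult.commute mult.left_commute)
  moreover have "((2*k+1) choose k) * Suc k = (2*k+1) * ((2*k) choose k)"
  proof -
    have "(2*k+1) choose Suc k = (2*k+1) choose k"
      using binomial_symmetric[of k "2*k+1"] by simp
    then show ?thesis using Suc_times_binomial_eq[of "2*k" k] by simp
  qed
  ultimately show ?thesis by simp
qed

lemma euler_seq_step: "(real j + 1) ^ (2*j+1) \<le> real j ^ j * (real j + 2) ^ (j+1)"
proof (cases "j = 0")
  case False
  define x where "x = - 1 / (real j + 1)^2"
  have "1 + real (j+1) * x \<le> (1 + x) ^ (j+1)"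
    by (rule Bernoulli_inequality) (simp add: x_def field_simps)
  moreover have "1 + real (j+1) * x = real j / (real j + 1)"
    by (simp add: x_def divide_simps) (simp add: power2_eq_square algebra_simps)
  moreover have "1 + x = real j * (real j + 2) / (real j + 1)^2"
    by (simp add: x_def divide_simps) (simp add: power2_eq_square algebra_simps)
  ultimately have "real j / (real j + 1) \<le> (real j * (real j + 2)) ^ (j+1) / ((real j + 1)^2) ^ (j+1)"
    by (metis power_divide)
  moreover have "((real j + 1)^2) ^ (j+1) = (real j + 1) ^ (2*j+1) * (real j + 1)"
    by (simp add: power2_eq_square power_mult)
  moreover have "(real j * (real j + 2)) ^ (j+1) = real j * (real j ^ j * (real j + 2) ^ (j+1))"
    by (simp add: power_mult_distrib)
  ultimately have "(real j * (real j + 1)) * (real j + 1) ^ (2*j+1)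
      \<le> (real j * (real j + 1)) * (real j ^ j * (real j + 2) ^ (j+1))"
    by (simp add: divide_simps ac_simps)
  then show ?thesis using False by (simp add: mult_le_cancel_left_pos)
qed simp

lemma euler_seq_mono: "mono (\<lambda>j. (1 + 1 / real j) ^ j)"
proof (rule mono_iff_le_Suc[THEN iffD2], intro allI)
  fix j
  show "(1 + 1 / real j) ^ j \<le> (1 + 1 / real (Suc j)) ^ Suc j"
  proof (cases "j = 0")
    case False
    have "j + (j + 1) = 2 * j + 1" by simp
    then have "(real j + 1) ^ j * (real j + 1) ^ (j+1) \<le> (real j + 2) ^ (j+1) * real j ^ j"
      using euler_seq_step[of j] by (simp only: power_add[symmetric] mult.commute)
    moreover have "(1 + 1 / real j) ^ j = (real j + 1) ^ j / real j ^ j"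
      using False by (simp add: field_simps power_divide)
    moreover have "(1 + 1 / real (Suc j)) ^ Suc j = (real j + 2) ^ (j+1) / (real j + 1) ^ (j+1)"
      by (simp add: field_simps power_divide)
    ultimately show ?thesis using False by (simp add: divide_simps ac_simps)
  qed simp
qed

text \<open>The probability that a binomial variable with parameters \<open>n\<close> and \<open>m/n\<close> takes its
  mean value \<open>m\<close>.\<close>
definition binom_peak :: "nat \<Rightarrow> nat \<Rightarrow> real" where
  "binom_peak n m = real (n choose m) * real m ^ m * real (n - m) ^ (n - m) / real n ^ n"

lemma binom_peak_nonneg: "binom_peak n m \<ge> 0"
  by (simp add: binom_peak_def)

lemma binom_peak_sym: "m \<le> n \<Longrightarrow> binom_peak n (n - m) = binom_peak n m"
  by (simp add: binom_peak_def binomial_symmetric[of m n] mult_ac)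

lemma binom_peak_Suc_le:
  assumes "2 * (m + 1) \<le> n"
  shows "binom_peak n (Suc m) \<le> binom_peak n m"
proof -
  define j where "j = n - Suc m"
  have j: "n - m = Suc j" "m + 1 \<le> j" using assms by (auto simp: j_def)
  have "real ((n choose Suc m) * Suc m) = real ((n choose m) * Suc j)"
    using binomial_Suc_times[of n m] unfolding j(1) by (rule arg_cong)
  then have binom: "real (n choose Suc m) * (real m + 1) = real (n choose m) * (real j + 1)"
    by (simp only: of_nat_mult of_nat_Suc add.commute)
  have euler: "(real m + 1) ^ m * real j ^ j \<le> real m ^ m * (real j + 1) ^ j"
  proof (cases "m = 0")
    case False
    have "(1 + 1 / real m) ^ m \<le> (1 + 1 / real j) ^ j"
      using monoD[OF euler_seq_mono, of m j] j(2) by simp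
    moreover have "(1 + 1 / real i) ^ i = (real i + 1) ^ i / real i ^ i" if "i > 0" for i
      using that by (simp add: field_simps power_divide)
    ultimately show ?thesis using False j(2) by (simp add: divide_simps ac_simps)
  qed (simp add: power_mono)
  have "binom_peak n (Suc m) = real (n choose Suc m) * (real m + 1) ^ Suc m * real j ^ j / real n ^ n"
    unfolding binom_peak_def j_def[symmetric] by (simp only: of_nat_Suc add.commute)
  also have "\<dots> = real (n choose Suc m) * (real m + 1) * ((real m + 1) ^ m * real j ^ j) / real n ^ n"
    by (simp only: power_Suc mult.assoc)
  also have "\<dots> \<le> real (n choose m) * (real j + 1) * (real m ^ m * (real j + 1) ^ j) / real n ^ n"
    unfolding binom by (intro divide_right_mono mult_left_mono euler) auto
  also have "\<dots> = real (n choose m) * real m ^ m * (real j + 1) ^ Suc j / real n ^ n"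
    by (simp only: power_Suc mult.assoc mult.left_commute)
  also have "\<dots> = binom_peak n m"
    unfolding binom_peak_def j(1) by (simp only: of_nat_Suc add.commute)
  finally show ?thesis .
qed

lemma binom_peak_central_le:
  assumes "m \<le> n div 2"
  shows "binom_peak n (n div 2) \<le> binom_peak n m"
  using assms
proof (induction m rule: inc_induct)
  case (step m)
  then have "2 * (m + 1) \<le> n" by presburger
  then show ?case using step.IH binom_peak_Suc_le[of m n] by linarith
qed simp

lemma binom_peak_even: "binom_peak (2*k) k = real ((2*k) choose k) / 4 ^ k"
proof -
  have "2 * k - k = k" by simp
  moreover have "real (2*k) ^ (2*k) = 4 ^ k * (real k ^ k * real k ^ k)"
    by (simp add: power2_eq_square power_mult power_mult_distrib)
  ultimately show ?thesis
    unfolding binom_peak_def by (simp add: mult_ac) arith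
qed

lemma central_binomial_sqrt_bound:
  assumes "k \<ge> 1"
  shows "(real ((2*k) choose k) / 4 ^ k)^2 * (4 * real k) \<ge> 1"
  using assms
proof (induction k rule: dec_induct)
  case base
  then show ?case by (simp add: power2_eq_square)
next
  case (step k)
  define c where "c = real ((2*k) choose k) / 4 ^ k"
  have ratio: "real ((2 * Suc k) choose Suc k) / 4 ^ Suc k = c * ((2*real k + 1) / (2*real k + 2))"
  proof -
    define b0 b1 where "b0 = real ((2*k) choose k)" and "b1 = real ((2 * Suc k) choose Suc k)"
    have b: "b1 * (real k + 1) = 2 * (2*real k + 1) * b0"
      using arg_cong[OF central_binomial_Suc[of k], of real] unfolding b0_def b1_def
      by (simp add: algebra_simps)
    have "b1 * (4 ^ k * (2*real k + 2)) = b1 * (real k + 1) * (2 * 4 ^ k)"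
      by (simp add: algebra_simps)
    also have "\<dots> = b0 * (2*real k + 1) * 4 ^ Suc k"
      unfolding b by (simp add: algebra_simps)
    finally show ?thesis unfolding c_def b0_def[symmetric] b1_def[symmetric] by (simp add: divide_simps)
  qed
  have k: "real k > 0" using step.hyps by simp
  have "(c * ((2*real k + 1) / (2*real k + 2)))^2 * (4 * real (Suc k))
      = c^2 * (4 * real k) * ((2*real k + 1)^2 / (4 * real k * (real k + 1)))"
    using k by (simp add: divide_simps) (simp add: power2_eq_square algebra_simps)
  also have "\<dots> \<ge> 1 * 1"
  proof (rule mult_mono)
    show "(2*real k + 1)^2 / (4 * real k * (real k + 1)) \<ge> 1"
      using k by (simp add: divide_simps) (simp add: power2_eq_square algebra_simps)
  qed (use k step.IH in \<open>simp_all add: c_def\<close>)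
  finally show ?case unfolding ratio by simp
qed

lemma binom_peak_odd:
  "binom_peak (2*k+1) k
     = binom_peak (2*k+2) (k+1) * (real (2*k) ^ k * real (2*k+2) ^ (k+1) / real (2*k+1) ^ (2*k+1))"
proof -
  have binom: "real ((2*k+2) choose (k+1)) = 2 * real ((2*k+1) choose k)"
  proof -
    have "(Suc (2*k+1) choose Suc k) * Suc k = (2 * ((2*k+1) choose k)) * Suc k"
      using Suc_times_binomial_eq[of "2*k+1" k] by (simp only: mult_ac) simp
    then show ?thesis by (simp only: mult_cancel2 Suc_eq_plus1 add_Suc_right) simp
  qed
  have "real (2*k) ^ k * real (2*k+2) ^ (k+1) = (2 * real k) ^ k * (2 * (real k + 1)) ^ (k+1)"
    by (simp add: ac_simps)
  also have "\<dots> = (2 ^ k * 2 ^ (k+1)) * (real k ^ k * (real k + 1) ^ (k+1))"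
    by (simp only: power_mult_distrib mult_ac)
  also have "(2::real) ^ k * 2 ^ (k+1) = 2 ^ (2*k+1)"
  proof -
    have "k + (k + 1) = 2 * k + 1" by simp
    then show ?thesis by (metis power_add)
  qed
  finally have powers:
    "real (2*k) ^ k * real (2*k+2) ^ (k+1) = 2 ^ (2*k+1) * (real k ^ k * (real k + 1) ^ (k+1))" .
  have "(4::real) ^ (k+1) = 2 ^ (2 * (k+1))" by (simp add: power_mult)
  also have "2 * (k+1) = Suc (2*k+1)" by simp
  finally have four: "(4::real) ^ (k+1) = 2 * 2 ^ (2*k+1)" by (simp only: power_Suc)
  have "binom_peak (2*k+2) (k+1) = real ((2*k+2) choose (k+1)) / 4 ^ (k+1)"
    using binom_peak_even[of "k+1"] by (simp add: algebra_simps)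
  then show ?thesis
    unfolding powers binom four by (simp add: binom_peak_def ac_simps)
qed

lemma binom_peak_odd_factor:
  "(real (2*k) ^ k * real (2*k+2) ^ (k+1) / real (2*k+1) ^ (2*k+1))^2 * real (2*k+1) \<ge> real (2*k+2)"
proof -
  define A B D where "A = real (2*k)" and "B = real (2*k+1)" and "D = real (2*k+2)"
  have B: "B > 0" and D: "D > 0" by (simp_all add: B_def D_def)
  have "B ^ (4*k+1) \<le> A ^ (2*k) * D ^ (2*k+1)"
    using euler_seq_step[of "2*k"] by (simp add: A_def B_def D_def ac_simps)
  then have "D * B ^ (4*k+1) \<le> A ^ (2*k) * D ^ (2*k+1) * D"
    using D by (simp add: mult.commute)
  then have "D \<le> A ^ (2*k) * D ^ (2*k+1) * D / B ^ (4*k+1)"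
    using B by (simp add: pos_le_divide_eq)
  also have "\<dots> = (A ^ k * D ^ (k+1) / B ^ (2*k+1))^2 * B"
  proof -
    have sq: "(x ^ n) ^ 2 = x ^ (2*n - 1) * x" if "n > 0" for x :: real and n
    proof -
      have "n * 2 = Suc (2*n - 1)" using that by simp
      then show ?thesis by (metis power_mult power_Suc2)
    qed
    have "(A ^ k * D ^ (k+1) / B ^ (2*k+1))^2 * B = (A^k)^2 * (D^(k+1))^2 / (B^(2*k+1))^2 * B"
      by (simp only: power_divide power_mult_distrib)
    also have "(A^k)^2 = A^(2*k)" by (simp only: power_mult[symmetric] mult.commute)
    also have "(D^(k+1))^2 = D^(2*k+1) * D" using sq[of "k+1" D] by simp
    also have "(B^(2*k+1))^2 = B^(4*k+1) * B" using sq[of "2*k+1" B] by simp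
    finally show ?thesis using B by simp
  qed
  finally show ?thesis by (simp add: A_def B_def D_def)
qed

lemma binom_peak_central_bound:
  assumes "n \<ge> 1"
  shows "binom_peak n (n div 2) ^ 2 * (2 * real n) \<ge> 1"
proof (cases "even n")
  case True
  then obtain k where n: "n = 2*k" by blast
  with assms have "k \<ge> 1" by simp
  then show ?thesis using central_binomial_sqrt_bound[of k] binom_peak_even[of k] n by simp
next
  case False
  then obtain k where n: "n = 2*k+1" using oddE by blast
  define c where "c = binom_peak (2*k+2) (k+1)"
  define phi where "phi = real (2*k) ^ k * real (2*k+2) ^ (k+1) / real (2*k+1) ^ (2*k+1)"
  have "2 * (k+1) = 2*k+2" by simp
  then have c: "c^2 * (4 * real (k+1)) \<ge> 1"
    using central_binomial_sqrt_bound[of "k+1"] binom_peak_even[of "k+1"] unfolding c_def by simp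
  have phi: "phi^2 * real (2*k+1) \<ge> real (2*k+2)"
    unfolding phi_def by (rule binom_peak_odd_factor)
  have "binom_peak n (n div 2) ^ 2 * (2 * real n)
      = (c^2 * (4 * real (k+1))) * (phi^2 * real (2*k+1) / real (2*k+2))"
    using binom_peak_odd[of k] unfolding n c_def[symmetric] phi_def[symmetric]
    by (simp add: field_simps power2_eq_square)
  also have "\<dots> \<ge> 1 * 1"
    by (rule mult_mono) (use c phi in \<open>simp_all add: divide_simps\<close>)
  finally show ?thesis by simp
qed

lemma binom_peak_lower_bound:
  assumes "n \<ge> 1" "m \<le> n"
  shows "binom_peak n m ^ 2 * (2 * real n) \<ge> 1"
proof -
  obtain m' where "m' \<le> n div 2" "binom_peak n m' = binom_peak n m"
  proof (cases "m \<le> n div 2")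
    case False
    then have "n - m \<le> n div 2" by presburger
    then show ?thesis using that binom_peak_sym[OF assms(2)] by blast
  qed (use that in blast)
  then have "binom_peak n (n div 2) \<le> binom_peak n m"
    using binom_peak_central_le by metis
  then have "binom_peak n (n div 2) ^ 2 \<le> binom_peak n m ^ 2"
    using binom_peak_nonneg by (simp add: power_mono)
  then have "binom_peak n (n div 2) ^ 2 * (2 * real n) \<le> binom_peak n m ^ 2 * (2 * real n)"
    by (rule mult_right_mono) simp
  then show ?thesis
    using binom_peak_central_bound[OF assms(1)] by linarith
qed

section \<open>Entropy and the exponent \<open>eta\<close>\<close>

definition entropy_nats :: "real \<Rightarrow> real" where
  "entropy_nats x = - x * ln x - (1 - x) * ln (1 - x)"

lemma bin_entropy_eq_entropy_nats: "bin_entropy x = entropy_nats x / ln 2"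
  unfolding bin_entropy_def entropy_nats_def log_def by (simp add: field_simps)

lemma entropy_nats_0 [simp]: "entropy_nats 0 = 0"
  by (simp add: entropy_nats_def)

lemma entropy_nats_one_minus: "entropy_nats (1 - x) = entropy_nats x"
  by (simp add: entropy_nats_def algebra_simps)

lemma entropy_nats_inverse:
  fixes q :: real
  assumes "q > 1"
  shows "entropy_nats (1/q) = ln q - (q - 1) / q * ln (q - 1)"
proof -
  have "1 - 1/q = (q - 1) / q" using assms by (simp add: field_simps)
  then have "entropy_nats (1/q) = - (1/q) * ln (1/q) - (q - 1) / q * ln ((q - 1) / q)"
    by (simp add: entropy_nats_def)
  also have "\<dots> = ln q - (q - 1) / q * ln (q - 1)"
    using assms by (simp add: ln_div field_simps)
  finally show ?thesis .
qed

lemma entropy_nats_has_derivative: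
  assumes "0 < x" "x < 1"
  shows "(entropy_nats has_real_derivative (ln (1 - x) - ln x)) (at x)"
proof -
  have "((\<lambda>x. - x * ln x - (1 - x) * ln (1 - x)) has_real_derivative
        (- (1 * ln x + x * (1 / x)) - ((- 1) * ln (1 - x) + (1 - x) * ((- 1) / (1 - x))))) (at x)"
    using assms by (auto intro!: derivative_eq_intros)
  moreover have "- (1 * ln x + x * (1 / x)) - ((- 1) * ln (1 - x) + (1 - x) * ((- 1) / (1 - x)))
      = ln (1 - x) - ln x"
    using assms by (simp add: field_simps)
  ultimately show ?thesis unfolding entropy_nats_def[abs_def] by simp
qed

lemma entropy_nats_chain [derivative_intros]:
  assumes "(g has_real_derivative g') (at x)" "0 < g x" "g x < 1"
    and "D = (ln (1 - g x) - ln (g x)) * g'"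
  shows "((\<lambda>x. entropy_nats (g x)) has_real_derivative D) (at x)"
  using DERIV_chain2[OF entropy_nats_has_derivative[OF assms(2,3)] assms(1)] assms(4) by simp

lemma continuous_on_entropy_nats:
  assumes "0 < b" "b < 1"
  shows "continuous_on {0..b} entropy_nats"
  unfolding continuous_on_eq_continuous_within
proof
  fix x assume x: "x \<in> {0..b}"
  show "continuous (at x within {0..b}) entropy_nats"
  proof (cases "x = 0")
    case True
    have "(entropy_nats \<longlongrightarrow> 0) (at_right 0)"
      unfolding entropy_nats_def[abs_def] by real_asymp
    then show ?thesis
      using True assms by (simp add: continuous_within at_within_Icc_at_right)
  next
    case False
    then have "isCont entropy_nats x"
      using x assms by (intro DERIV_isCont[OF entropy_nats_has_derivative]) auto
    then show ?thesis by (rule continuous_at_imp_continuous_at_within)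
  qed
qed

lemma ln_binomial_ge_entropy:
  assumes "0 < m" "m < n"
  shows "ln (real (n choose m)) \<ge> real n * entropy_nats (real m / real n) - ln (2 * real n) / 2"
proof -
  have pos: "real m > 0" "real (n - m) > 0" "real n > 0" "real (n choose m) > 0"
    using assms by auto
  have peak: "binom_peak n m > 0"
    using pos by (simp add: binom_peak_def)
  have "1 \<le> binom_peak n m ^ 2 * (2 * real n)"
    using binom_peak_lower_bound assms by simp
  then have "0 \<le> ln (binom_peak n m ^ 2 * (2 * real n))"
    by simp
  also have "\<dots> = 2 * ln (binom_peak n m) + ln (2 * real n)"
    using peak pos by (simp add: ln_mult ln_realpow)
  finally have "0 \<le> 2 * ln (binom_peak n m) + ln (2 * real n)" .
  moreover have "ln (binom_peak n m) = ln (real (n choose m)) + real m * ln (real m)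
      + real (n - m) * ln (real (n - m)) - real n * ln (real n)"
    using pos by (simp add: binom_peak_def ln_mult ln_div ln_realpow)
  moreover have "real n * entropy_nats (real m / real n)
      = real n * ln (real n) - real m * ln (real m) - real (n - m) * ln (real (n - m))"
  proof -
    have "1 - real m / real n = real (n - m) / real n"
      using pos assms by (simp add: field_simps of_nat_diff)
    then have "real n * entropy_nats (real m / real n)
        = - real m * ln (real m / real n) - real (n - m) * ln (real (n - m) / real n)"
      unfolding entropy_nats_def using pos by (simp add: field_simps)
    also have "\<dots> = real n * ln (real n) - real m * ln (real m) - real (n - m) * ln (real (n - m))"
      using pos assms by (simp add: ln_div algebra_simps of_nat_diff)
    finally show ?thesis .
  qed
  ultimately show ?thesis by linarith
qed

lemma entropy_nats_plus_linear_mono: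
  fixes q t1 t2 :: real
  assumes q: "q > 1" and t: "0 < t1" "t1 \<le> t2" "t2 \<le> (q - 1) / q"
  shows "entropy_nats t1 + t1 * ln (q - 1) \<le> entropy_nats t2 + t2 * ln (q - 1)"
proof (rule DERIV_nonneg_imp_nondecreasing[OF t(2)])
  fix x assume x: "t1 \<le> x" "x \<le> t2"
  have "(q - 1) / q < 1" using q by simp
  then have x01: "0 < x" "x < 1" using t x by auto
  have "q * x \<le> q * t2" using x q by (intro mult_left_mono) auto
  moreover have "q * t2 \<le> q - 1" using t q by (simp add: field_simps)
  ultimately have "x * q \<le> q - 1" by (simp add: mult.commute)
  then have "ln x \<le> ln ((1 - x) * (q - 1))"
    using x01 q by (simp add: algebra_simps)
  also have "\<dots> = ln (1 - x) + ln (q - 1)"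
    using x01 q by (simp add: ln_mult)
  finally have "0 \<le> ln (1 - x) - ln x + ln (q - 1)" by simp
  moreover have "((\<lambda>t. entropy_nats t + t * ln (q - 1)) has_real_derivative
      (ln (1 - x) - ln x + ln (q - 1))) (at x)"
    using x01 by (auto intro!: derivative_eq_intros)
  ultimately show "\<exists>y. ((\<lambda>t. entropy_nats t + t * ln (q - 1)) has_real_derivative y) (at x) \<and> 0 \<le> y"
    by blast
qed

definition eta_nats :: "real \<Rightarrow> real \<Rightarrow> real" where
  "eta_nats q x = entropy_nats ((q - 1) / q * x) - x * entropy_nats (1 / q)"

lemma eta_eq_eta_nats: "eta q \<epsilon> = eta_nats (real q) (1 - \<epsilon>) / ln 2"
  unfolding eta_def eta_nats_def bin_entropy_eq_entropy_nats by (simp add: diff_divide_distrib)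

lemma ln_plus_one_mult_le:
  fixes q :: real
  assumes "q \<ge> 2"
  shows "(q - 1) * ln (q + 1) \<le> q * ln q"
proof -
  have "1 + 1/q = (q + 1) / q" using assms by (simp add: field_simps)
  then have "ln (q + 1) - ln q = ln (1 + 1/q)"
    using assms by (simp add: ln_div)
  also have "\<dots> \<le> 1/q"
    using assms by (intro ln_add_one_self_le_self) simp
  finally have "q * (ln (q + 1) - ln q) \<le> 1"
    using assms by (simp add: field_simps)
  moreover have "1 \<le> ln (q + 1)"
  proof -
    have "exp 1 \<le> q + 1" using exp_le assms by linarith
    then show ?thesis using assms by (simp add: ln_ge_iff)
  qed
  ultimately show ?thesis by (simp add: algebra_simps)
qed

lemma eta_nats_antimono:
  fixes q x1 x2 :: real
  assumes q: "q \<ge> 2" and x: "1/2 \<le> x1" "x1 \<le> x2" "x2 \<le> 1"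
  shows "eta_nats q x2 \<le> eta_nats q x1"
proof -
  define r where "r = (q - 1) / q"
  have r: "0 < r" "r < 1" unfolding r_def using q by auto
  have r_half: "r / 2 = (q - 1) / (2 * q)" "1 - r / 2 = (q + 1) / (2 * q)"
    unfolding r_def using q by (auto simp: field_simps)
  have c: "entropy_nats (1/q) = ln q - r * ln (q - 1)"
    unfolding r_def using entropy_nats_inverse q by simp
  have "r * ln (q + 1) \<le> ln q"
    using ln_plus_one_mult_le[OF q] q unfolding r_def by (simp add: field_simps)
  \<comment> \<open>The derivative decreases in \<open>x\<close>, so it is nonpositive once it is at \<open>x = 1/2\<close>.\<close>
  then have slope_at_half: "(ln (q + 1) - ln (q - 1)) * r - entropy_nats (1/q) \<le> 0"
    unfolding c by (simp add: algebra_simps)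
  show ?thesis
    unfolding eta_nats_def r_def[symmetric]
  proof (rule DERIV_nonpos_imp_nonincreasing[OF x(2)])
    fix x assume xx: "x1 \<le> x" "x \<le> x2"
    have rx: "r / 2 \<le> r * x" "r * x \<le> r" using xx x r by (auto intro: mult_left_mono)
    then have rx01: "0 < r * x" "r * x < 1" using r by linarith+
    have "ln (1 - r * x) \<le> ln (1 - r / 2)" "ln (r / 2) \<le> ln (r * x)"
      using rx rx01 r by simp_all
    then have "ln (1 - r * x) - ln (r * x) \<le> ln (1 - r / 2) - ln (r / 2)"
      by simp
    also have "\<dots> = ln (q + 1) - ln (q - 1)"
      unfolding r_half(2) unfolding r_half(1) using q by (simp add: ln_div)
    finally have "(ln (1 - r * x) - ln (r * x)) * r - entropy_nats (1/q) \<le> 0"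
      using slope_at_half r by (smt (verit) mult_right_mono)
    moreover have "((\<lambda>x. entropy_nats (r * x) - x * entropy_nats (1/q)) has_real_derivative
        ((ln (1 - r * x) - ln (r * x)) * r - entropy_nats (1/q))) (at x)"
      using rx01 by (auto intro!: derivative_eq_intros)
    ultimately show "\<exists>y. ((\<lambda>x. entropy_nats (r * x) - x * entropy_nats (1/q))
        has_real_derivative y) (at x) \<and> y \<le> 0"
      by blast
  qed
qed

lemma nonneg_between_zeros_if_derivative_antimono:
  fixes f f' :: "real \<Rightarrow> real"
  assumes cont: "continuous_on {a..b} f" and ends: "f a = 0" "f b = 0"
    and deriv: "\<And>y. a < y \<Longrightarrow> y < b \<Longrightarrow> (f has_real_derivative f' y) (at y)"
    and anti: "\<And>y z. a < y \<Longrightarrow> y \<le> z \<Longrightarrow> z < b \<Longrightarrow> f' z \<le> f' y"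
    and x: "a \<le> x" "x \<le> b"
  shows "f x \<ge> 0"
proof (rule ccontr)
  assume neg: "\<not> f x \<ge> 0"
  with ends x have ax: "a < x" "x < b" by (auto simp: le_less)
  have diff: "f differentiable (at y)" if "a < y" "y < b" for y
    using deriv[OF that] real_differentiable_def by blast
  obtain l1 z1 where z1: "a < z1" "z1 < x" "(f has_real_derivative l1) (at z1)" "f x - f a = (x - a) * l1"
    using MVT[OF ax(1) continuous_on_subset[OF cont]] diff ax by fastforce
  obtain l2 z2 where z2: "x < z2" "z2 < b" "(f has_real_derivative l2) (at z2)" "f b - f x = (b - x) * l2"
    using MVT[OF ax(2) continuous_on_subset[OF cont]] diff ax by fastforce
  have "l1 = f' z1" "l2 = f' z2"
    using DERIV_unique[OF z1(3) deriv[of z1]] DERIV_unique[OF z2(3) deriv[of z2]] z1 z2 ax by auto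
  moreover have "l1 < 0" using z1(4) ends neg ax by (simp add: zero_le_mult_iff)
  moreover have "l2 > 0"
  proof -
    have "(b - x) * l2 > 0" using z2(4) ends neg by simp
    then show ?thesis using ax by (simp add: zero_less_mult_iff)
  qed
  moreover have "f' z2 \<le> f' z1" using anti z1 z2 by simp
  ultimately show False by simp
qed

lemma log_odds_sum_antimono:
  fixes r a1 a2 :: real
  assumes r: "0 < r" "r < 1" and a: "0 < a1" "a1 \<le> a2" "a2 \<le> r/2"
  shows "ln (1 - a2) + ln (1 - r + a2) - ln a2 - ln (r - a2)
       \<le> ln (1 - a1) + ln (1 - r + a1) - ln a1 - ln (r - a1)"
proof -
  have eq: "ln (1 - a) + ln (1 - r + a) - ln a - ln (r - a) = ln ((1 - r) / (a * (r - a)) + 1)"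
    if "0 < a" "a \<le> r/2" for a
  proof -
    have "(1 - a) * (1 - r + a) = 1 - r + a * (r - a)" by (simp add: algebra_simps)
    then have "(1 - r) / (a * (r - a)) + 1 = (1 - a) * (1 - r + a) / (a * (r - a))"
      using that r by (simp add: field_simps)
    then show ?thesis using that r by (simp add: ln_mult ln_div)
  qed
  have "a1 * (r - a1) \<le> a2 * (r - a2)"
  proof -
    have "a2 * (r - a2) - a1 * (r - a1) = (a2 - a1) * (r - a1 - a2)" by (simp add: algebra_simps)
    also have "\<dots> \<ge> 0" using a by (intro mult_nonneg_nonneg) auto
    finally show ?thesis by simp
  qed
  then have "(1 - r) / (a2 * (r - a2)) \<le> (1 - r) / (a1 * (r - a1))"
    using a r by (intro divide_left_mono mult_pos_pos) auto
  moreover have "0 < (1 - r) / (a2 * (r - a2)) + 1"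
    using a r by (intro add_nonneg_pos divide_nonneg_pos) auto
  ultimately show ?thesis
    using eq[of a1] eq[of a2] a by simp
qed

lemma eta_nats_reflect_le:
  fixes q x :: real
  assumes q: "q \<ge> 2" and x: "0 \<le> x" "x \<le> 1/2"
  shows "eta_nats q (1 - x) \<le> eta_nats q x"
proof -
  define r where "r = (q - 1) / q"
  define c where "c = entropy_nats (1/q)"
  have r: "0 < r" "r < 1" unfolding r_def using q by auto
  define D where "D = (\<lambda>x. entropy_nats (r * x) - x * c - (entropy_nats (r * (1 - x)) - (1 - x) * c))"
  define D' where "D' = (\<lambda>y. (ln (1 - r * y) + ln (1 - r + r * y) - ln (r * y) - ln (r - r * y)) * r - 2 * c)"
  have "D x \<ge> 0"
  proof (rule nonneg_between_zeros_if_derivative_antimono[of 0 "1/2" D D'])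
    have "continuous_on {0..1/2} (\<lambda>x. entropy_nats (r * x))"
      using r by (intro continuous_on_compose2[OF continuous_on_entropy_nats[of "r/2"]])
        (auto intro!: continuous_intros mult_left_mono)
    moreover have "continuous_on {0..1/2} (\<lambda>x. entropy_nats (r * (1 - x)))"
      using r by (intro continuous_on_compose2[OF continuous_on_entropy_nats[of r]])
        (auto intro!: continuous_intros simp: mult_le_cancel_left1)
    ultimately show "continuous_on {0..1/2} D"
      unfolding D_def by (intro continuous_intros)
    have "entropy_nats r = c"
      unfolding c_def r_def using q entropy_nats_one_minus[of "1/q"] by (simp add: diff_divide_distrib)
    then show "D 0 = 0" "D (1/2) = 0" by (simp_all add: D_def)
  next
    fix y :: real assume y: "0 < y" "y < 1/2"
    have "r * y \<le> r" "r * (1 - y) \<le> r" using r y by (simp_all add: mult_le_cancel_left1)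
    then have "r * y < 1" "r * (1 - y) < 1" using r by linarith+
    moreover have "0 < r * y" "0 < r * (1 - y)" using r y by auto
    ultimately show "(D has_real_derivative D' y) (at y)"
      unfolding D_def D'_def by (auto intro!: derivative_eq_intros simp: algebra_simps)
  next
    fix y z :: real assume yz: "0 < y" "y \<le> z" "z < 1/2"
    then have "ln (1 - r * z) + ln (1 - r + r * z) - ln (r * z) - ln (r - r * z)
        \<le> ln (1 - r * y) + ln (1 - r + r * y) - ln (r * y) - ln (r - r * y)"
      using r by (intro log_odds_sum_antimono) (auto intro: mult_left_mono)
    then show "D' z \<le> D' y"
      unfolding D'_def using r by (simp add: mult_right_mono)
  qed (use x in auto)
  then show ?thesis
    unfolding D_def eta_nats_def r_def c_def by simp
qed

lemma eta_nats_min: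
  fixes q x \<epsilon> :: real
  assumes q: "q \<ge> 2" and \<epsilon>: "0 < \<epsilon>" "\<epsilon> \<le> 1/2" and x: "\<epsilon> \<le> x" "x \<le> 1 - \<epsilon>"
  shows "eta_nats q (1 - \<epsilon>) \<le> eta_nats q x"
proof (cases "x \<ge> 1/2")
  case True
  then show ?thesis using eta_nats_antimono[OF q True x(2)] \<epsilon> by simp
next
  case False
  then have "eta_nats q (1 - \<epsilon>) \<le> eta_nats q (1 - x)"
    using eta_nats_antimono[OF q, of "1 - x" "1 - \<epsilon>"] x \<epsilon> by simp
  also have "\<dots> \<le> eta_nats q x"
    using eta_nats_reflect_le[OF q, of x] False x \<epsilon> by simp
  finally show ?thesis .
qed

lemma sphere_volume_ge_exp_eta_nats:
  fixes q n s w :: nat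
  assumes q: "q \<ge> 2" and s: "1 \<le> s"
    and w: "(real q - 1) / real q * real s \<le> real w" "real w \<le> (real q - 1) / real q * real n"
  shows "exp (real n * eta_nats q (real s / real n)) / sqrt (2 * real n)
      \<le> real (n choose w) * (real q - 1) ^ w / real q ^ s"
proof -
  define r where "r = (real q - 1) / real q"
  define x where "x = real s / real n"
  have r: "0 < r" "r < 1" unfolding r_def using q by auto
  have "0 < r * real s" using r s by simp
  then have "0 < real w" "0 < r * real n" using w unfolding r_def[symmetric] by linarith+
  then have w_pos: "0 < w" and n: "real n > 0" using r by (simp_all add: zero_less_mult_iff)
  have "r * real n < real n" using r n by simp
  then have w_n: "w < n" using w(2) unfolding r_def[symmetric] by simp
  have "ln (real (n choose w)) + real w * ln (real q - 1)
      \<ge> real n * (entropy_nats (real w / real n) + real w / real n * ln (real q - 1)) - ln (2 * real n) / 2"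
    using ln_binomial_ge_entropy[OF w_pos w_n] n by (simp add: algebra_simps)
  moreover have "real n * (entropy_nats (r * x) + r * x * ln (real q - 1))
      \<le> real n * (entropy_nats (real w / real n) + real w / real n * ln (real q - 1))"
  proof (intro mult_left_mono entropy_nats_plus_linear_mono)
    show "r * x \<le> real w / real n" "real w / real n \<le> (real q - 1) / real q"
      using w n unfolding r_def[symmetric] x_def by (simp_all add: field_simps)
  qed (use q r s n in \<open>auto simp: x_def\<close>)
  moreover have "real n * (entropy_nats (r * x) + r * x * ln (real q - 1)) - real s * ln (real q)
      = real n * eta_nats q x"
  proof -
    have c: "entropy_nats (1 / real q) = ln (real q) - r * ln (real q - 1)"
      using entropy_nats_inverse[of "real q"] q unfolding r_def by simp
    show ?thesis
      unfolding eta_nats_def r_def[symmetric] c x_def using n by (simp add: field_simps)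
  qed
  ultimately have "real n * eta_nats q x - ln (2 * real n) / 2
      \<le> ln (real (n choose w)) + real w * ln (real q - 1) - real s * ln (real q)"
    by linarith
  also have "\<dots> = ln (real (n choose w) * (real q - 1) ^ w / real q ^ s)"
    using w_n q by (simp add: ln_mult ln_div ln_realpow)
  finally have "ln (exp (real n * eta_nats q x) / sqrt (2 * real n))
      \<le> ln (real (n choose w) * (real q - 1) ^ w / real q ^ s)"
    using n by (simp add: ln_div ln_sqrt)
  then show ?thesis
    unfolding x_def using n w_n q by (subst (asm) ln_le_cancel_iff) auto
qed

section \<open>Codes\<close>

lemma card_field_ge_2: "2 \<le> CARD('a::{finite,field})"
proof -
  have "card {0 :: 'a, 1} = 2" by simp
  moreover have "card {0 :: 'a, 1} \<le> CARD('a)" by (intro card_mono) auto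
  ultimately show ?thesis by simp
qed

definition hamming_weight :: "'a::zero ^ 'n \<Rightarrow> nat" where
  "hamming_weight c = card {i. c $ i \<noteq> 0}"

lemma hamming_dist_eq_weight:
  fixes x y :: "'a::ab_group_add ^ 'n"
  shows "hamming_dist x y = hamming_weight (x - y)"
  by (simp add: hamming_dist_def hamming_weight_def)

lemma card_ge_power_dim:
  fixes C :: "('a::{finite,field} ^ 'n) set"
  assumes "vec.subspace C"
  shows "CARD('a) ^ vec.dim C \<le> card C"
proof -
  obtain B where B: "B \<subseteq> C" "vec.independent B" "C \<subseteq> vec.span B" "card B = vec.dim C"
    using vec.basis_exists by blast
  define comb where "comb = (\<lambda>g. \<Sum>b\<in>B. g b *s b)"
  have "comb g \<in> vec.span B" for g
    unfolding comb_def by (intro vec.span_sum vec.span_scale vec.span_base)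
  then have "comb g \<in> C" for g
    using vec.span_minimal[OF B(1) assms] by blast
  then have "comb ` (B \<rightarrow>\<^sub>E UNIV) \<subseteq> C" by blast
  moreover have "inj_on comb (B \<rightarrow>\<^sub>E UNIV)"
  proof (rule inj_onI)
    fix g g' assume g: "g \<in> B \<rightarrow>\<^sub>E UNIV" "g' \<in> B \<rightarrow>\<^sub>E UNIV" and "comb g = comb g'"
    then have "(\<Sum>b\<in>B. (g b - g' b) *s b) = 0"
      unfolding comb_def by (simp add: vec.scale_left_diff_distrib sum_subtractf)
    moreover have "\<And>c. (\<Sum>b\<in>B. c b *s b) = 0 \<Longrightarrow> \<forall>b\<in>B. c b = 0"
      using B(2) vec.independent_explicit by blast
    ultimately have "\<forall>b\<in>B. g b - g' b = 0" by metis
    then show "g = g'" using g by (intro PiE_ext) auto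
  qed
  moreover have "finite B" using B(2) vec.independent_explicit by blast
  ultimately show ?thesis
    using B(4) card_inj_on_le[of comb "B \<rightarrow>\<^sub>E UNIV" C] by (simp add: card_PiE)
qed

lemma exists_close_codewords:
  fixes C :: "('a::{finite,field} ^ 'n) set"
  assumes lin: "vec.subspace C" and dim_pos: "1 \<le> vec.dim C"
  shows "\<exists>x\<in>C. \<exists>y\<in>C. x \<noteq> y \<and> hamming_dist x y \<le> CARD('n) - vec.dim C + 1"
proof -
  define k where "k = vec.dim C"
  have "k \<le> CARD('n)" unfolding k_def by (rule dim_subset_UNIV_cart_gen)
  then have "k - 1 \<le> card (UNIV :: 'n set)" by simp
  then obtain I :: "'n set" where I: "card I = k - 1"
    using obtain_subset_with_card_n[of "k - 1" "UNIV :: 'n set"] by metis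
  define restr where "restr = (\<lambda>c :: 'a ^ 'n. restrict (\<lambda>i. c $ i) I)"
  have "card (restr ` C) \<le> card (I \<rightarrow>\<^sub>E (UNIV :: 'a set))"
    unfolding restr_def by (intro card_mono) auto
  also have "\<dots> = CARD('a) ^ (k - 1)" using I by (simp add: card_PiE)
  also have "\<dots> < CARD('a) ^ k"
    using dim_pos unfolding k_def by (intro power_strict_increasing) (use card_field_ge_2[where 'a='a] in auto)
  also have "\<dots> \<le> card C" unfolding k_def by (rule card_ge_power_dim[OF lin])
  finally have "\<not> inj_on restr C" using card_image by fastforce
  then obtain x y where xy: "x \<in> C" "y \<in> C" "x \<noteq> y" "restr x = restr y"
    unfolding inj_on_def by blast
  have "x $ i = y $ i" if "i \<in> I" for i
    using fun_cong[OF xy(4), of i] that unfolding restr_def by simp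
  then have "{i. x $ i \<noteq> y $ i} \<subseteq> UNIV - I" by auto
  then have "hamming_dist x y \<le> card (UNIV - I)"
    unfolding hamming_dist_def by (intro card_mono) auto
  also have "\<dots> = CARD('n) - vec.dim C + 1"
    using I dim_pos \<open>k \<le> CARD('n)\<close> unfolding k_def by (simp add: card_Diff_subset)
  finally show ?thesis using xy by blast
qed

lemma low_weight_codeword_if_not_MDS:
  fixes C :: "('a::{finite,field} ^ 'n) set"
  assumes lin: "vec.subspace C" and dim_pos: "1 \<le> vec.dim C" and not_MDS: "\<not> is_MDS C"
  shows "\<exists>c\<in>C. c \<noteq> 0 \<and> hamming_weight c \<le> CARD('n) - vec.dim C"
proof -
  define S where "S = {hamming_dist x y | x y. x \<in> C \<and> y \<in> C \<and> x \<noteq> y}"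
  have md: "min_dist C = Inf S" unfolding min_dist_def S_def by simp
  obtain x y where xy: "x \<in> C" "y \<in> C" "x \<noteq> y" "hamming_dist x y \<le> CARD('n) - vec.dim C + 1"
    using exists_close_codewords[OF lin dim_pos] by blast
  then have "S \<noteq> {}" and "min_dist C \<le> CARD('n) - vec.dim C + 1"
    unfolding md S_def by (blast, force intro: cInf_lower2)
  moreover have "min_dist C \<noteq> CARD('n) - vec.dim C + 1"
    using not_MDS unfolding is_MDS_def by simp
  ultimately have "min_dist C \<in> S" "min_dist C \<le> CARD('n) - vec.dim C"
    unfolding md by (simp_all add: Inf_nat_def1)
  then obtain u v where "u \<in> C" "v \<in> C" "u \<noteq> v" "hamming_weight (u - v) \<le> CARD('n) - vec.dim C"
    unfolding S_def by (auto simp: hamming_dist_eq_weight)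
  moreover have "u - v \<in> C" using vec.subspace_diff[OF lin] \<open>u \<in> C\<close> \<open>v \<in> C\<close> .
  ultimately show ?thesis by force
qed

lemma diff_div_Suc_le:
  fixes m L t :: nat
  assumes "L * m \<le> t * (L + 1)"
  shows "m - m div (L + 1) \<le> t"
proof (rule ccontr)
  define b p where "b = m div (L + 1)" and "p = m mod (L + 1)"
  have m: "m = b * (L + 1) + p"
    unfolding b_def p_def by (rule div_mult_mod_eq[symmetric])
  have "p \<le> L" unfolding p_def by (simp add: less_Suc_eq_le)
  assume "\<not> m - m div (L + 1) \<le> t"
  then have "(t + 1) * (L + 1) \<le> (m - b) * (L + 1)"
    unfolding b_def by (intro mult_le_mono1) simp
  also have "(m - b) * (L + 1) = L * m + p"
    by (subst (1 2) m) (simp add: algebra_simps)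
  finally show False using assms \<open>p \<le> L\<close> by (simp add: algebra_simps)
qed

lemma exists_colouring_with_large_classes:
  assumes "finite T"
  obtains f :: "'b \<Rightarrow> nat" where "\<And>i. i \<le> L \<Longrightarrow> card T div (L + 1) \<le> card {j \<in> T. f j = i}"
proof -
  define m b where "m = card T" and "b = card T div (L + 1)"
  obtain e where e: "bij_betw e {0..<m} T"
    using ex_bij_betw_nat_finite[OF assms] unfolding m_def by blast
  define f where "f j = inv_into {0..<m} e j div b" for j
  have "b \<le> card {j \<in> T. f j = i}" if i: "i \<le> L" for i
  proof -
    define block where "block = {i * b..<(i + 1) * b}"
    have "(i + 1) * b \<le> (L + 1) * b" using i by simp
    also have "\<dots> \<le> m" unfolding m_def b_def by (rule times_div_less_eq_dividend)
    finally have block: "block \<subseteq> {0..<m}" unfolding block_def by auto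
    then have inj: "inj_on e block"
      using bij_betw_imp_inj_on[OF e] inj_on_subset by blast
    have "e ` block \<subseteq> {j \<in> T. f j = i}"
    proof
      fix j assume "j \<in> e ` block"
      then obtain t where t: "t \<in> block" "j = e t" by blast
      then have "inv_into {0..<m} e j = t"
        using block bij_betw_imp_inj_on[OF e] by (auto intro: inv_into_f_f)
      moreover have "t div b = i"
        using t(1) unfolding block_def by (intro div_nat_eqI) (auto simp: mult.commute)
      moreover have "j \<in> T" using t block bij_betw_imp_surj_on[OF e] by blast
      ultimately show "j \<in> {j \<in> T. f j = i}" unfolding f_def by simp
    qed
    then have "card (e ` block) \<le> card {j \<in> T. f j = i}"
      using assms by (intro card_mono) auto
    then show ?thesis
      using card_image[OF inj] unfolding block_def by simp
  qed
  then show thesis using that unfolding b_def by blast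
qed

lemma exists_word_close_to_multiples:
  fixes c :: "'a::field ^ 'n" and a :: "nat \<Rightarrow> 'a"
  shows "\<exists>y. \<forall>i\<le>L. hamming_dist (a i *s c) y \<le> hamming_weight c - hamming_weight c div (L + 1)"
proof -
  define T where "T = {j. c $ j \<noteq> 0}"
  obtain f where f: "\<And>i. i \<le> L \<Longrightarrow> card T div (L + 1) \<le> card {j \<in> T. f j = i}"
    using exists_colouring_with_large_classes[of T] by auto
  define y where "y = (\<chi> j. if f j \<le> L then a (f j) * c $ j else 0)"
  have "hamming_dist (a i *s c) y \<le> card T - card T div (L + 1)" if i: "i \<le> L" for i
  proof -
    have "{j. (a i *s c) $ j \<noteq> y $ j} \<subseteq> T - {j \<in> T. f j = i}"
      using i unfolding T_def y_def by auto
    then have "hamming_dist (a i *s c) y \<le> card (T - {j \<in> T. f j = i})"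
      unfolding hamming_dist_def by (intro card_mono) auto
    also have "\<dots> = card T - card {j \<in> T. f j = i}"
      by (intro card_Diff_subset) auto
    finally show ?thesis using f[OF i] by linarith
  qed
  then show ?thesis unfolding hamming_weight_def T_def by blast
qed

lemma not_list_decodable_if_low_weight:
  fixes C :: "('a::{finite,field} ^ 'n) set"
  assumes lin: "vec.subspace C" and c: "c \<in> C" "c \<noteq> 0"
    and field_size: "L + 1 \<le> CARD('a)" and weight: "L * hamming_weight c \<le> \<tau> * (L + 1)"
  shows "\<not> list_decodable C \<tau> L"
proof
  assume ld: "list_decodable C \<tau> L"
  obtain a :: "nat \<Rightarrow> 'a" where a: "inj_on a {..L}"
    using card_le_inj[of "{..L}" "UNIV :: 'a set"] field_size by auto
  obtain y where y: "\<And>i. i \<le> L \<Longrightarrow> hamming_dist (a i *s c) y \<le> \<tau>"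
    using exists_word_close_to_multiples[where a = a and c = c and L = L] diff_div_Suc_le[OF weight]
    by (meson order.trans)
  have "inj_on (\<lambda>i. a i *s c) {..L}"
    using a c(2) by (auto intro!: inj_onI dest: inj_onD)
  then have "L + 1 = card ((\<lambda>i. a i *s c) ` {..L})"
    by (simp add: card_image)
  also have "\<dots> \<le> card {x \<in> C. hamming_dist x y \<le> \<tau>}"
    using y vec.subspace_scale[OF lin c(1)] by (intro card_mono) auto
  also have "\<dots> \<le> L" using ld unfolding list_decodable_def by blast
  finally show False by simp
qed

lemma not_list_decodable_if_not_MDS:
  fixes C :: "('a::{finite,field} ^ 'n) set"
  assumes lin: "vec.subspace C" and dim_pos: "1 \<le> vec.dim C" and not_MDS: "\<not> is_MDS C"
    and field_size: "L + 1 \<le> CARD('a)"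
    and \<tau>: "real L * (real CARD('n) - real (vec.dim C)) \<le> real \<tau> * (real L + 1)"
  shows "\<not> list_decodable C \<tau> L"
proof -
  obtain c where c: "c \<in> C" "c \<noteq> 0" "hamming_weight c \<le> CARD('n) - vec.dim C"
    using low_weight_codeword_if_not_MDS[OF lin dim_pos not_MDS] by blast
  moreover have "vec.dim C \<le> CARD('n)" by (rule dim_subset_UNIV_cart_gen)
  ultimately have "hamming_weight c + vec.dim C \<le> CARD('n)" by linarith
  then have "real (hamming_weight c) \<le> real CARD('n) - real (vec.dim C)"
    by (simp only: of_nat_add[symmetric] of_nat_le_iff[symmetric])
  then have "real L * real (hamming_weight c) \<le> real L * (real CARD('n) - real (vec.dim C))"
    by (rule mult_left_mono) simp
  with \<tau> have "real (L * hamming_weight c) \<le> real (\<tau> * (L + 1))"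
    by (simp add: algebra_simps)
  then have "L * hamming_weight c \<le> \<tau> * (L + 1)"
    by (simp only: of_nat_le_iff)
  then show ?thesis
    by (rule not_list_decodable_if_low_weight[OF lin c(1,2) field_size])
qed

lemma card_sphere_ge:
  fixes c :: "'a::{finite,field} ^ 'n"
  shows "(CARD('n) choose w) * (CARD('a) - 1) ^ w \<le> card {y. hamming_dist c y = w}"
proof -
  define supports where "supports = {S :: 'n set. card S = w}"
  define Sig where "Sig = Sigma supports (\<lambda>S. S \<rightarrow>\<^sub>E (UNIV - {0 :: 'a}))"
  define perturb where "perturb = (\<lambda>(S, g). (\<chi> j. if j \<in> S then c $ j + g j else c $ j) :: 'a ^ 'n)"
  have "card Sig = (\<Sum>S\<in>supports. card (S \<rightarrow>\<^sub>E (UNIV - {0 :: 'a})))"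
    unfolding Sig_def by (intro card_SigmaI) auto
  also have "\<dots> = (\<Sum>S\<in>supports. (CARD('a) - 1) ^ w)"
    by (intro sum.cong) (auto simp: supports_def card_PiE card_Diff_subset)
  also have "\<dots> = (CARD('n) choose w) * (CARD('a) - 1) ^ w"
    using n_subsets[of "UNIV :: 'n set" w] by (simp add: supports_def)
  finally have card_Sig: "card Sig = (CARD('n) choose w) * (CARD('a) - 1) ^ w" .
  have diff_set: "{j. c $ j \<noteq> perturb (S, g) $ j} = S" if "(S, g) \<in> Sig" for S g
    using that unfolding Sig_def perturb_def by auto
  have "inj_on perturb Sig"
  proof (rule inj_onI)
    fix x x' assume x: "x \<in> Sig" "x' \<in> Sig" "perturb x = perturb x'"
    obtain S g S' g' where Sg: "x = (S, g)" "x' = (S', g')" by fastforce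
    have S: "S = S'" using diff_set[of S g] diff_set[of S' g'] x Sg by metis
    have "g j = g' j" if "j \<in> S" for j
      using arg_cong[OF x(3), of "\<lambda>v. v $ j"] that S unfolding Sg perturb_def by simp
    then have "g = g'"
      using x unfolding Sg S Sig_def by (intro PiE_ext) auto
    then show "x = x'" using Sg S by simp
  qed
  moreover have "perturb ` Sig \<subseteq> {y. hamming_dist c y = w}"
    using diff_set unfolding hamming_dist_def by (force simp: Sig_def supports_def)
  ultimately show ?thesis
    using card_Sig card_inj_on_le[of perturb Sig] by fastforce
qed

lemma card_list_decodable_le:
  fixes C :: "('a::{finite,field} ^ 'n) set"
  assumes ld: "list_decodable C \<tau> L" and w: "w \<le> \<tau>"
  shows "card C * ((CARD('n) choose w) * (CARD('a) - 1) ^ w) \<le> L * CARD('a) ^ CARD('n)"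
proof -
  define close where "close = (\<lambda>c y. hamming_dist (c :: 'a ^ 'n) y \<le> \<tau>)"
  have count: "card {x \<in> A. P x} = (\<Sum>x\<in>A. if P x then 1 else 0 :: nat)" if "finite A" for A P
    using that by (simp add: sum.If_cases Int_def)
  have "card C * ((CARD('n) choose w) * (CARD('a) - 1) ^ w) \<le> (\<Sum>c\<in>C. card {y. close c y})"
  proof -
    have "(CARD('n) choose w) * (CARD('a) - 1) ^ w \<le> card {y. close c y}" for c
      using card_sphere_ge[of w c] card_mono[of "{y. close c y}" "{y. hamming_dist c y = w}"] w
      unfolding close_def by fastforce
    then show ?thesis
      using sum_mono[of C "\<lambda>_. (CARD('n) choose w) * (CARD('a) - 1) ^ w" "\<lambda>c. card {y. close c y}"]
      by simp
  qed
  also have "\<dots> = (\<Sum>y\<in>UNIV. card {c \<in> C. close c y})"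
  proof -
    have "card {y. close c y} = (\<Sum>y\<in>UNIV. if close c y then 1 else 0)" for c
      using count[of UNIV "close c"] by simp
    then show ?thesis using count[of C] by (simp add: sum.swap[of _ C])
  qed
  also have "\<dots> \<le> (\<Sum>y\<in>(UNIV :: ('a ^ 'n) set). L)"
    using ld unfolding list_decodable_def close_def by (intro sum_mono) auto
  also have "\<dots> = L * CARD('a) ^ CARD('n)" by simp
  finally show ?thesis .
qed

lemma sphere_volume_le_list_size:
  fixes C :: "('a::{finite,field} ^ 'n) set"
  assumes lin: "vec.subspace C" and ld: "list_decodable C \<tau> L" and w: "w \<le> \<tau>"
  shows "real (CARD('n) choose w) * (real CARD('a) - 1) ^ w / real CARD('a) ^ (CARD('n) - vec.dim C)
      \<le> real L"
proof -
  define n q k where "n = CARD('n)" and "q = CARD('a)" and "k = vec.dim C"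
  have q: "2 \<le> q" unfolding q_def by (rule card_field_ge_2)
  have "k \<le> n" unfolding k_def n_def by (rule dim_subset_UNIV_cart_gen)
  have "q ^ k * ((n choose w) * (q - 1) ^ w) \<le> card C * ((n choose w) * (q - 1) ^ w)"
    using card_ge_power_dim[OF lin] unfolding q_def k_def by (rule mult_le_mono1)
  also have "\<dots> \<le> L * q ^ n"
    using card_list_decodable_le[OF ld w] unfolding n_def q_def .
  also have "\<dots> = L * q ^ (n - k) * q ^ k"
    using \<open>k \<le> n\<close> by (simp add: power_add[symmetric])
  finally have "(n choose w) * (q - 1) ^ w \<le> L * q ^ (n - k)"
    using q by (simp add: mult.commute)
  then have "real ((n choose w) * (q - 1) ^ w) \<le> real (L * q ^ (n - k))"
    by (simp only: of_nat_le_iff)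
  then have "real (n choose w) * (real q - 1) ^ w \<le> real L * real q ^ (n - k)"
    using q by (simp add: of_nat_diff)
  then show ?thesis using q unfolding n_def q_def k_def by (simp add: divide_simps)
qed

lemma exists_radius:
  fixes q s n L \<tau> :: nat
  assumes q: "2 \<le> q" "q \<le> L" and s: "s < n" and \<tau>: "real L * real s \<le> real \<tau> * (real L + 1)"
  obtains w where "w \<le> \<tau>" "(real q - 1) / real q * real s \<le> real w"
    "real w \<le> (real q - 1) / real q * real n"
proof
  define x where "x = (real q - 1) / real q * real s"
  have x: "0 \<le> x" unfolding x_def using q by simp
  then show "x \<le> real (nat \<lceil>x\<rceil>)" by linarith
  have "real q \<le> real L" using q by simp
  then have "(real q - 1) / real q \<le> real L / (real L + 1)"
    using q by (simp add: divide_simps algebra_simps)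
  then have "x \<le> real L / (real L + 1) * real s"
    unfolding x_def by (intro mult_right_mono) auto
  also have "\<dots> \<le> real \<tau>" using \<tau> by (simp add: divide_simps mult.commute)
  finally show "nat \<lceil>x\<rceil> \<le> \<tau>" by (simp add: ceiling_le nat_le_iff)
  \<comment> \<open>\<open>\<lceil>x\<rceil> < x + 1\<close>, sharpened by integrality to \<open>\<lceil>x\<rceil> \<le> x + (q - 1)/q\<close>\<close>
  have "real (nat \<lceil>x\<rceil> * q) < real ((q - 1) * s + q)"
  proof -
    have "real (nat \<lceil>x\<rceil>) * real q < (x + 1) * real q"
      using x q by (intro mult_strict_right_mono) linarith+
    also have "\<dots> = (real q - 1) * real s + real q"
      unfolding x_def using q by (simp add: field_simps)
    finally show ?thesis using q by (simp add: of_nat_diff)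
  qed
  then have "nat \<lceil>x\<rceil> * q \<le> (q - 1) * (s + 1)"
    using q by (simp only: of_nat_less_iff) (simp add: algebra_simps)
  also have "\<dots> \<le> (q - 1) * n" using s by (intro mult_le_mono2) simp
  finally have "real (nat \<lceil>x\<rceil> * q) \<le> real ((q - 1) * n)"
    by (simp only: of_nat_le_iff)
  moreover have "real (q - 1) = real q - 1" using q by (simp add: of_nat_diff)
  ultimately have "real (nat \<lceil>x\<rceil>) * real q \<le> (real q - 1) * real n"
    by (simp only: of_nat_mult)
  then show "real (nat \<lceil>x\<rceil>) \<le> (real q - 1) / real q * real n"
    using q by (simp add: field_simps)
qed

lemma not_list_decodable_if_large_list:
  fixes C :: "('a::{finite,field} ^ 'n) set" and \<epsilon> :: real
  assumes lin: "vec.subspace C" and \<epsilon>: "0 < \<epsilon>" "\<epsilon> \<le> 1/2"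
    and rate: "\<epsilon> * real CARD('n) \<le> real (vec.dim C)" "real (vec.dim C) \<le> (1 - \<epsilon>) * real CARD('n)"
    and L: "CARD('a) \<le> L"
    and L_bound: "real L < 1 / sqrt (2 * real CARD('n)) * 2 powr (eta CARD('a) \<epsilon> * real CARD('n))"
    and \<tau>: "real L * (real CARD('n) - real (vec.dim C)) \<le> real \<tau> * (real L + 1)"
  shows "\<not> list_decodable C \<tau> L"
proof
  assume ld: "list_decodable C \<tau> L"
  define n q k where "n = CARD('n)" and "q = CARD('a)" and "k = vec.dim C"
  define s where "s = n - k"
  have q: "2 \<le> q" unfolding q_def by (rule card_field_ge_2)
  have n: "real n > 0" unfolding n_def by simp
  have "k \<le> n" unfolding k_def n_def by (rule dim_subset_UNIV_cart_gen)
  then have s: "real s = real n - real k" unfolding s_def by simp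
  have "0 < \<epsilon> * real n" using \<epsilon> n by simp
  moreover have "(1 - \<epsilon>) * real n = real n - \<epsilon> * real n" by (simp add: algebra_simps)
  ultimately have "0 < real k" "real k < real n"
    using rate unfolding n_def[symmetric] k_def[symmetric] by linarith+
  then have "0 < k" "k < n" by simp_all
  then have s_bounds: "1 \<le> s" "s < n" unfolding s_def by auto
  have x_bounds: "\<epsilon> \<le> real s / real n" "real s / real n \<le> 1 - \<epsilon>"
    using rate n unfolding s n_def[symmetric] k_def[symmetric] by (simp_all add: field_simps)
  have "real L * real s \<le> real \<tau> * (real L + 1)"
    using \<tau> unfolding s n_def k_def .
  then obtain w where w: "w \<le> \<tau>" "(real q - 1) / real q * real s \<le> real w"
    "real w \<le> (real q - 1) / real q * real n"
    using exists_radius[OF q L[folded q_def] s_bounds(2)] by blast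
  have "2 powr (eta q \<epsilon> * real n) = exp (real n * eta_nats q (1 - \<epsilon>))"
    unfolding powr_def eta_eq_eta_nats by (simp add: mult_ac)
  then have "2 powr (eta q \<epsilon> * real n) / sqrt (2 * real n)
      = exp (real n * eta_nats q (1 - \<epsilon>)) / sqrt (2 * real n)" by simp
  also have "\<dots> \<le> exp (real n * eta_nats q (real s / real n)) / sqrt (2 * real n)"
    using eta_nats_min[of q \<epsilon> "real s / real n"] q \<epsilon> x_bounds n
    by (intro divide_right_mono) (simp_all add: mult_left_mono)
  also have "\<dots> \<le> real (n choose w) * (real q - 1) ^ w / real q ^ s"
    using q s_bounds(1) w(2,3) by (rule sphere_volume_ge_exp_eta_nats)
  also have "\<dots> \<le> real L"
    using sphere_volume_le_list_size[OF lin ld w(1)] unfolding n_def q_def k_def s_def .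
  finally show False using L_bound unfolding n_def q_def by simp
qed

theorem mainTheorem3:
  fixes C :: "('a::{finite,field} ^ 'n) set"
    and \<epsilon> :: real and k L \<tau> :: nat
  assumes eps: "0 < \<epsilon>" "\<epsilon> \<le> 1/2"
    and lin: "vec.subspace C" and dimC: "vec.dim C = k"
    and rate: "\<epsilon> \<le> real k / real CARD('n)" "real k / real CARD('n) \<le> 1 - \<epsilon>"
    and Lpos: "0 < L"
    and Lbound: "real L < 1 / sqrt (2 * real CARD('n)) * 2 powr (eta CARD('a) \<epsilon> * real CARD('n))"
    and tau: "real \<tau> \<ge> real L * (real CARD('n) - real k) / (real L + 1)"
    and ld: "list_decodable C \<tau> L"
  shows "is_MDS C"
proof (rule ccontr)
  assume not_MDS: "\<not> is_MDS C"
  have n: "real CARD('n) > 0" by simp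
  have k: "\<epsilon> * real CARD('n) \<le> real k" "real k \<le> (1 - \<epsilon>) * real CARD('n)"
    using rate n by (simp_all add: field_simps)
  have \<tau>: "real L * (real CARD('n) - real k) \<le> real \<tau> * (real L + 1)"
    using tau by (simp add: field_simps)
  show False
  proof (cases "L + 1 \<le> CARD('a)")
    case True
    have "0 < \<epsilon> * real CARD('n)" using eps n by simp
    then have "1 \<le> vec.dim C" using k dimC by simp
    then show False
      using not_list_decodable_if_not_MDS[OF lin _ not_MDS True] \<tau> ld unfolding dimC by blast
  next
    case False
    then have "CARD('a) \<le> L" by simp
    then show False
      using not_list_decodable_if_large_list[OF lin eps] k \<tau> Lbound ld unfolding dimC by blast
  qed
qed

end
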